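(* If $M\in\mathrm{PGL}_2(\mathbb{Q})$ is such that $MAM^{-1}\in\mathrm{PSL}_2(\mathbb{Z})$ for every $A\in\Gamma^3$, then $M\in\mathrm{PSL}_2(\mathbb{Z})\cup\mathrm{PSL}_2(\mathbb{Z})J$, where $J=\left(\begin{smallmatrix}-1&0\\0&1\end{smallmatrix}\right)$.
   Context: $\Gamma^3=\{\left(\begin{smallmatrix}a&b\\c&d\end{smallmatrix}\right)\in\mathrm{PSL}_2(\mathbb{Z}) : ab+cd\equiv0\bmod3\}$. Elements of $\mathrm{PGL}_2(\mathbb{Q})$ are invertible rational $2\times2$ matrices modulo nonzero scalars. *)

theory Defs
  imports "HOL-Analysis.Analysis"
begin

text \<open>2x2 rational matrices are represented by the type rat^2^2.
  An element of PGL_2(Q) is represented by an invertible matrix; its class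
  consists of all nonzero scalar multiples.\<close>

definition smul_mat :: "rat \<Rightarrow> rat^2^2 \<Rightarrow> rat^2^2" where
  "smul_mat c M = (\<chi> i j. c * M$i$j)"

definition int_mat :: "rat^2^2 \<Rightarrow> bool" where
  "int_mat M \<longleftrightarrow> (\<forall>i j. M$i$j \<in> \<int>)"

definition in_SL2Z :: "rat^2^2 \<Rightarrow> bool" where
  "in_SL2Z M \<longleftrightarrow> int_mat M \<and> det M = 1"

definition in_PSL2Z :: "rat^2^2 \<Rightarrow> bool" where
  "in_PSL2Z M \<longleftrightarrow> (\<exists>c. c \<noteq> 0 \<and> in_SL2Z (smul_mat c M))"

text \<open>Gamma^3: elements (a b; c d) of PSL_2(Z) with ab + cd = 0 mod 3
  (condition invariant under sign, so checked on an SL_2(Z) representative).\<close>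
definition in_Gamma3 :: "rat^2^2 \<Rightarrow> bool" where
  "in_Gamma3 A \<longleftrightarrow> in_PSL2Z A \<and>
     (\<exists>c. c \<noteq> 0 \<and> in_SL2Z (smul_mat c A) \<and>
        (let B = smul_mat c A in
          (\<exists>k::int. B$1$1 * B$1$2 + B$2$1 * B$2$2 = 3 * of_int k)))"

definition J :: "rat^2^2" where
  "J = (\<chi> i j. if i = j then (if i = 1 then -1 else 1) else 0)"

end

theory Submission
  imports Defs
begin

text \<open>Write \<open>M = (p q; r t)\<close> with \<open>e = det M\<close>. For \<open>A = (a b; c d)\<close> in \<open>SL\<^sub>2(\<int>)\<close> the
  upper right entry of \<open>M A M\<^sup>-\<^sup>1\<close> is \<open>(b p\<^sup>2 + (d - a) p q - c q\<^sup>2) / e\<close>, and similarly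
  for the lower left entry with the second row \<open>(r, t)\<close>. Four suitable elements of \<open>\<Gamma>\<^sup>3\<close>
  give binary forms whose integer span contains \<open>x\<^sup>2\<close> and \<open>y\<^sup>2\<close>, so every squared entry of
  \<open>M\<close> divided by \<open>e\<close> is an integer. Rescale \<open>M\<close> to a primitive integer matrix \<open>cM\<close> with
  determinant \<open>\<delta> = c\<^sup>2 e\<close>: then \<open>\<delta>\<close> divides the square of every entry of \<open>cM\<close>, so no
  prime divides \<open>\<delta>\<close> and \<open>\<delta> = \<plusminus>1\<close>. If \<open>\<delta> = 1\<close>, \<open>M \<in> PSL\<^sub>2(\<int>)\<close>; if \<open>\<delta> = -1\<close>, \<open>M J\<close> is.\<close>

definition mat2 :: "'a \<Rightarrow> 'a \<Rightarrow> 'a \<Rightarrow> 'a \<Rightarrow> 'a^2^2" where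
  "mat2 a b c d = (\<chi> i j. if i = 1 then (if j = 1 then a else b) else (if j = 1 then c else d))"

lemma mat2_nth [simp]:
  "mat2 a b c d $ 1 $ 1 = a" "mat2 a b c d $ 1 $ 2 = b"
  "mat2 a b c d $ 2 $ 1 = c" "mat2 a b c d $ 2 $ 2 = d"
  by (simp_all add: mat2_def)

lemma mat2_eta: "M = mat2 (M$1$1) (M$1$2) (M$2$1) (M$2$2)"
  by (simp add: vec_eq_iff forall_2)

lemma mat2_eq_mat2_iff [simp]:
  "mat2 a b c d = mat2 a' b' c' d' \<longleftrightarrow> a = a' \<and> b = b' \<and> c = c' \<and> d = d'"
  by (metis mat2_nth)

lemma mat2_mult:
  fixes a :: "'a::semiring_1"
  shows "mat2 a b c d ** mat2 a' b' c' d' =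
    mat2 (a*a' + b*c') (a*b' + b*d') (c*a' + d*c') (c*b' + d*d')"
  by (simp add: vec_eq_iff forall_2 matrix_matrix_mult_def sum_2)

lemma det_mat2: "det (mat2 a b c d) = a*d - b*c"
  by (simp add: det_2)

lemma mat_1_eq_mat2: "mat 1 = mat2 1 0 0 1"
  by (simp add: vec_eq_iff forall_2 mat_def)

lemma smul_mat_mat2: "smul_mat x (mat2 a b c d) = mat2 (x*a) (x*b) (x*c) (x*d)"
  by (simp add: vec_eq_iff forall_2 smul_mat_def)

lemma int_mat_mat2: "int_mat (mat2 a b c d) \<longleftrightarrow> a \<in> \<int> \<and> b \<in> \<int> \<and> c \<in> \<int> \<and> d \<in> \<int>"
  by (simp add: int_mat_def forall_2)

lemma J_eq_mat2: "J = mat2 (-1) 0 0 1"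
  by (simp add: vec_eq_iff forall_2 J_def)

lemma matrix_inv_inverse:
  fixes A :: "'a::semiring_1^'n^'n"
  assumes "invertible A"
  shows "A ** matrix_inv A = mat 1" "matrix_inv A ** A = mat 1"
  using someI_ex[OF assms[unfolded invertible_def]] by (simp_all add: matrix_inv_def)

lemma matrix_inv_unique:
  fixes A :: "'a::semiring_1^'n^'n"
  assumes "A ** B = mat 1" "B ** A = mat 1"
  shows "matrix_inv A = B"
proof -
  have "matrix_inv A ** A = mat 1"
    using assms invertible_def matrix_inv_inverse(2) by blast
  then show ?thesis
    by (metis assms(1) matrix_mul_assoc matrix_mul_lid matrix_mul_rid)
qed

lemma matrix_inv_mat2:
  fixes a :: rat
  assumes "a*d - b*c \<noteq> 0"
  shows "matrix_inv (mat2 a b c d) = smul_mat (1 / (a*d - b*c)) (mat2 d (-b) (-c) a)"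
  using assms
  by (intro matrix_inv_unique) (simp_all add: smul_mat_mat2 mat2_mult mat_1_eq_mat2 divide_simps)

lemma det_smul_mat: "det (smul_mat c M) = c^2 * det M"
  by (simp add: det_2 smul_mat_def power2_eq_square algebra_simps)

lemma int_mat_if_in_PSL2Z_det_1:
  assumes "in_PSL2Z X" "det X = 1"
  shows "int_mat X"
proof -
  obtain c where c: "c \<noteq> 0" "in_SL2Z (smul_mat c X)"
    using assms(1) in_PSL2Z_def by blast
  then have "c^2 = 1"
    using assms(2) by (simp add: in_SL2Z_def det_smul_mat)
  then have "X$i$j = c * (smul_mat c X $i$j)" for i j
    by (simp add: smul_mat_def power2_eq_square flip: mult.assoc)
  moreover have "c \<in> \<int>"
    using \<open>c^2 = 1\<close> by (auto simp: power2_eq_1_iff)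
  ultimately show ?thesis
    using c(2) by (simp add: in_SL2Z_def int_mat_def)
qed

lemma in_Gamma3_mat2:
  assumes "a \<in> \<int>" "b \<in> \<int>" "c \<in> \<int>" "d \<in> \<int>" "a*d - b*c = 1" "a*b + c*d = 3 * of_int k"
  shows "in_Gamma3 (mat2 a b c d)"
proof -
  have "in_SL2Z (smul_mat 1 (mat2 a b c d))"
    using assms by (simp add: smul_mat_mat2 in_SL2Z_def int_mat_mat2 det_mat2)
  then show ?thesis
    using assms(6) unfolding in_Gamma3_def in_PSL2Z_def Let_def
    by (intro conjI exI[of _ "1::rat"]) (auto simp: smul_mat_mat2)
qed

definition conj_form :: "rat^2^2 \<Rightarrow> rat \<Rightarrow> rat \<Rightarrow> rat" where
  "conj_form A x y = A$1$2 * x^2 + (A$2$2 - A$1$1) * x * y - A$2$1 * y^2"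

lemma conj_mat2_off_diagonal:
  fixes p :: rat
  assumes "p*t - q*r \<noteq> 0"
  shows "(mat2 p q r t ** A ** matrix_inv (mat2 p q r t))$1$2 = conj_form A p q / (p*t - q*r)"
    and "(mat2 p q r t ** A ** matrix_inv (mat2 p q r t))$2$1 = - conj_form A r t / (p*t - q*r)"
  using assms
  by (subst (1 2) mat2_eta[of A], simp add: matrix_inv_mat2 mat2_mult smul_mat_mat2 conj_form_def
      power2_eq_square divide_simps, simp add: algebra_simps)+

lemma conj_form_div_det_Ints:
  assumes "invertible M"
    and conj: "\<forall>A. in_Gamma3 A \<longrightarrow> in_PSL2Z (M ** A ** matrix_inv M)"
    and "in_Gamma3 A" "det A = 1"
  shows "conj_form A (M$i$1) (M$i$2) / det M \<in> \<int>"
proof -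
  let ?X = "M ** A ** matrix_inv M"
  have "det ?X = det A * det (M ** matrix_inv M)"
    by (simp add: det_mul)
  then have "det ?X = 1"
    using assms(1,4) by (simp add: matrix_inv_inverse)
  then have "int_mat ?X"
    using conj assms(3) int_mat_if_in_PSL2Z_det_1 by blast
  then have X: "?X$1$2 \<in> \<int>" "- ?X$2$1 \<in> \<int>"
    by (simp_all add: int_mat_def)
  obtain p q r t where M: "M = mat2 p q r t"
    using mat2_eta by blast
  have "p*t - q*r \<noteq> 0"
    using assms(1) invertible_det_nz by (force simp: M det_mat2)
  from conj_mat2_off_diagonal[OF this, of A] X show ?thesis
    using exhaust_2[of i] by (auto simp: M det_mat2)
qed

lemma squares_div_Ints_if_conj_forms_div_Ints:
  assumes "\<And>A. in_Gamma3 A \<Longrightarrow> det A = 1 \<Longrightarrow> conj_form A x y / e \<in> \<int>"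
  shows "x^2 / e \<in> \<int>" "y^2 / e \<in> \<int>"
proof -
  have "in_Gamma3 (mat2 0 (-1) 1 0)" "in_Gamma3 (mat2 1 1 1 2)"
    "in_Gamma3 (mat2 2 1 1 1)" "in_Gamma3 (mat2 1 3 0 1)"
    by (rule in_Gamma3_mat2[where k=0], simp_all)
      (rule in_Gamma3_mat2[where k=1], simp_all)+
  then have f: "- (x^2 + y^2) / e \<in> \<int>" "(x^2 + x*y - y^2) / e \<in> \<int>"
    "(x^2 - x*y - y^2) / e \<in> \<int>" "3 * x^2 / e \<in> \<int>"
    using assms by (fastforce simp: conj_form_def det_mat2)+
  have "x^2 / e = - 2 * (- (x^2 + y^2) / e) + (x^2 + x*y - y^2) / e + (x^2 - x*y - y^2) / e
      - 3 * x^2 / e"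
    by (cases "e = 0") (simp_all add: field_simps)
  then show "x^2 / e \<in> \<int>"
    using f by (metis Ints_add Ints_diff Ints_mult Ints_minus Ints_numeral)
  have "y^2 / e = - (x^2 + y^2) / e - (x^2 + x*y - y^2) / e - (x^2 - x*y - y^2) / e
      + 3 * x^2 / e"
    by (cases "e = 0") (simp_all add: field_simps)
  then show "y^2 / e \<in> \<int>"
    using f by (metis Ints_add Ints_diff)
qed

lemma entry_square_div_det_Ints:
  assumes "invertible M"
    and "\<forall>A. in_Gamma3 A \<longrightarrow> in_PSL2Z (M ** A ** matrix_inv M)"
  shows "(M$i$j)^2 / det M \<in> \<int>"
proof -
  have "conj_form A (M$i$1) (M$i$2) / det M \<in> \<int>" if "in_Gamma3 A" "det A = 1" for A
    using conj_form_div_det_Ints[OF assms that] .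
  from squares_div_Ints_if_conj_forms_div_Ints[OF this] show ?thesis
    using exhaust_2[of j] by auto
qed

lemma common_denominator:
  fixes A :: "rat set"
  assumes "finite A"
  shows "\<exists>d::int. d > 0 \<and> (\<forall>x\<in>A. of_int d * x \<in> \<int>)"
  using assms
proof (induction A rule: finite_induct)
  case empty
  show ?case by (intro exI[of _ 1]) simp
next
  case (insert x A)
  then obtain d where d: "d > 0" "\<forall>y\<in>A. of_int d * y \<in> \<int>"
    by blast
  obtain n d' where nd: "quotient_of x = (n, d')"
    by fastforce
  have "d' > 0"
    using quotient_of_denom_pos[OF nd] .
  then have "of_int d' * x = of_int n"
    using quotient_of_div[OF nd] by simp
  have "of_int (d * d') * y \<in> \<int>" if "y \<in> insert x A" for y
  proof (cases "y = x")
    case True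
    then show ?thesis
      using \<open>of_int d' * x = of_int n\<close> by (simp add: mult.assoc)
  next
    case False
    then have "of_int d' * (of_int d * y) \<in> \<int>"
      using d(2) that by simp
    then show ?thesis
      by (simp add: mult_ac)
  qed
  then show ?case
    using d(1) \<open>d' > 0\<close> by (intro exI[of _ "d * d'"]) simp
qed

lemma primitive_integral_multiple:
  fixes x :: "'a::finite \<Rightarrow> rat"
  assumes "\<exists>i. x i \<noteq> 0"
  shows "\<exists>c m. c \<noteq> 0 \<and> (\<forall>i. c * x i = of_int (m i)) \<and> (\<forall>k. (\<forall>i. k dvd m i) \<longrightarrow> is_unit k)"
proof -
  obtain d :: int where d: "d > 0" "\<forall>i. of_int d * x i \<in> \<int>"
    using common_denominator[of "range x"] by auto
  then have "\<forall>i. \<exists>n. of_int d * x i = of_int n"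
    by (blast elim: Ints_cases)
  then obtain N where N: "\<And>i. of_int d * x i = of_int (N i)"
    by metis
  define g where "g = Gcd (range N)"
  obtain i0 where "x i0 \<noteq> 0"
    using assms by auto
  then have "N i0 \<noteq> 0"
    using N[of i0] d(1) by auto
  then have "g \<noteq> 0"
    by (auto simp: g_def)
  have g_dvd: "g dvd N i" for i
    by (simp add: g_def)
  define m where "m i = N i div g" for i
  have N_eq: "N i = m i * g" for i
    using g_dvd[of i] by (simp add: m_def)
  have "of_int d / of_int g * x i = of_int (m i)" for i
    using N[of i] N_eq[of i] \<open>g \<noteq> 0\<close> by (simp add: field_simps)
  moreover have "is_unit k" if "\<forall>i. k dvd m i" for k
  proof -
    have "k * g dvd N i" for i
      using that N_eq[of i] by (simp add: mult_dvd_mono)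
    then have "k * g dvd g"
      unfolding g_def by (intro Gcd_greatest) auto
    then show ?thesis
      using \<open>g \<noteq> 0\<close> dvd_mult_cancel_right[of k g 1] by simp
  qed
  moreover have "of_int d / of_int g \<noteq> (0::rat)"
    using d(1) \<open>g \<noteq> 0\<close> by simp
  ultimately show ?thesis
    by blast
qed

lemma is_unit_if_dvd_squares_of_primitive:
  fixes \<delta> :: int
  assumes "\<delta> \<noteq> 0" "\<And>i. \<delta> dvd (m i)^2" "\<And>k. \<forall>i. k dvd m i \<Longrightarrow> is_unit k"
  shows "is_unit \<delta>"
proof (rule ccontr)
  assume "\<not> is_unit \<delta>"
  then obtain p where p: "prime p" "p dvd \<delta>"
    using assms(1) prime_divisor_exists by blast
  then have "p dvd m i" for i
    using assms(2) prime_dvd_power dvd_trans by metis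
  then show False
    using assms(3) p(1) not_prime_unit by blast
qed

lemma det_unit_integral_multiple:
  fixes M :: "rat^2^2"
  assumes "det M \<noteq> 0" "\<And>i j. (M$i$j)^2 / det M \<in> \<int>"
  shows "\<exists>c. c \<noteq> 0 \<and> int_mat (smul_mat c M) \<and>
    (det (smul_mat c M) = 1 \<or> det (smul_mat c M) = -1)"
proof -
  have "\<exists>ij. (\<lambda>(i, j). M$i$j) ij \<noteq> 0"
    using assms(1) by (auto simp: det_2) metis
  then obtain c m where c: "c \<noteq> 0" "\<And>i j. c * M$i$j = of_int (m (i, j))"
    and m: "\<And>k. \<forall>ij. k dvd m ij \<Longrightarrow> is_unit k"
    using primitive_integral_multiple[of "\<lambda>(i, j). M$i$j"] by fastforce
  have cM: "smul_mat c M $i$j = of_int (m (i, j))" for i j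
    by (simp add: smul_mat_def c(2))
  define \<delta> where "\<delta> = m (1, 1) * m (2, 2) - m (1, 2) * m (2, 1)"
  have det: "det (smul_mat c M) = of_int \<delta>"
    by (simp add: det_2 cM \<delta>_def)
  moreover have det': "det (smul_mat c M) = c^2 * det M"
    by (rule det_smul_mat)
  ultimately have "\<delta> \<noteq> 0"
    using c(1) assms(1) by auto
  moreover have "\<delta> dvd (m ij)^2" for ij
  proof -
    obtain i j where ij: "ij = (i, j)"
      by fastforce
    have "of_int ((m ij)^2) / of_int \<delta> = (M$i$j)^2 / det M"
      using c(1) by (simp add: ij det' flip: c(2) det) (simp add: power2_eq_square field_simps)
    then show ?thesis
      using assms(2) \<open>\<delta> \<noteq> 0\<close> of_int_div_of_int_in_Ints_iff by (metis (no_types, lifting))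
  qed
  ultimately have "is_unit \<delta>"
    using m is_unit_if_dvd_squares_of_primitive by blast
  then have "\<delta> = 1 \<or> \<delta> = -1"
    using zdvd1_eq by fastforce
  then show ?thesis
    using c(1) det cM by (auto simp: int_mat_def)
qed

lemma in_SL2Z_smul_mult_J:
  assumes "int_mat (smul_mat c M)" "det (smul_mat c M) = -1"
  shows "in_SL2Z (smul_mat c (M ** J))"
proof -
  obtain p q r t where "M = mat2 p q r t"
    using mat2_eta by blast
  then show ?thesis
    using assms by (simp add: J_eq_mat2 mat2_mult smul_mat_mat2 in_SL2Z_def int_mat_mat2 det_mat2)
qed

lemma J_mult_J: "J ** J = mat 1"
  by (simp add: J_eq_mat2 mat2_mult mat_1_eq_mat2)

theorem lemma3p2:
  fixes M :: "rat^2^2"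
  assumes "invertible M"
    and "\<forall>A. in_Gamma3 A \<longrightarrow> in_PSL2Z (M ** A ** matrix_inv M)"
  shows "in_PSL2Z M \<or> (\<exists>B. in_PSL2Z B \<and> (\<exists>c. c \<noteq> 0 \<and> M = smul_mat c (B ** J)))"
proof -
  have "det M \<noteq> 0"
    using assms(1) invertible_det_nz by blast
  then obtain c where c: "c \<noteq> 0" "int_mat (smul_mat c M)"
    and det: "det (smul_mat c M) = 1 \<or> det (smul_mat c M) = -1"
    using det_unit_integral_multiple entry_square_div_det_Ints[OF assms] by blast
  show ?thesis
  proof (cases "det (smul_mat c M) = 1")
    case True
    then show ?thesis
      using c in_PSL2Z_def in_SL2Z_def by blast
  next
    case False
    then have "in_PSL2Z (M ** J)"
      using c det in_SL2Z_smul_mult_J in_PSL2Z_def by blast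
    moreover have "M = smul_mat 1 ((M ** J) ** J)"
      by (simp add: J_mult_J smul_mat_def flip: matrix_mul_assoc)
    ultimately show ?thesis
      by (metis one_neq_zero)
  qed
qed

end
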